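(* Let $G$ be a matching covered graph and let $\partial(X)$ be a nontrivial tight cut of $G$. If $G$ is cycle-extendable, then both $\partial(X)$-contractions $G/X$ and $G/\overline{X}$ are also cycle-extendable.
   Context: Graphs are loopless; multiple edges allowed. A graph is matching covered if it is connected, has at least two vertices, and every edge lies in some perfect matching; it is cycle-extendable if moreover for every even cycle $C$ the graph $G-V(C)$ has a perfect matching. For $X\subseteq V(G)$, $\partial(X)$ is the set of edges with exactly one end in $X$, and $\overline X = V(G)\setminus X$; $\partial(X)$ is a tight cut if every perfect matching of $G$ contains exactly one edge of $\partial(X)$, and nontrivial if $|X|\ge2$ and $|\overline X|\ge2$. $G/X$ is obtained from $G$ by shrinking $X$ to a single new vertex (deleting edges with both ends in $X$ and keeping all other edges, possibly creating parallel edges); $G/\overline X$ is defined analogously. *)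

theory Defs
  imports Main
begin

text \<open>A finite loopless multigraph: vertex set V, edge set E (edges are abstract
  objects, so parallel edges are allowed), and ends e = the set of its two
  distinct end vertices.\<close>

definition multigraph :: "'v set \<Rightarrow> 'e set \<Rightarrow> ('e \<Rightarrow> 'v set) \<Rightarrow> bool" where
  "multigraph V E ends \<longleftrightarrow> finite V \<and> finite E \<and>
     (\<forall>e\<in>E. ends e \<subseteq> V \<and> card (ends e) = 2)"

definition adjacent :: "'v set \<Rightarrow> 'e set \<Rightarrow> ('e \<Rightarrow> 'v set) \<Rightarrow> ('v \<times> 'v) set" where
  "adjacent V E ends = {(u, v). u \<in> V \<and> v \<in> V \<and> (\<exists>e\<in>E. ends e = {u, v})}"

definition connected_graph :: "'v set \<Rightarrow> 'e set \<Rightarrow> ('e \<Rightarrow> 'v set) \<Rightarrow> bool" where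
  "connected_graph V E ends \<longleftrightarrow> V \<noteq> {} \<and>
     (\<forall>u\<in>V. \<forall>v\<in>V. (u, v) \<in> (adjacent V E ends)\<^sup>*)"

definition perfect_matching_on ::
    "'v set \<Rightarrow> 'e set \<Rightarrow> ('e \<Rightarrow> 'v set) \<Rightarrow> 'e set \<Rightarrow> bool" where
  "perfect_matching_on W E ends M \<longleftrightarrow> M \<subseteq> E \<and> (\<forall>e\<in>M. ends e \<subseteq> W) \<and>
     (\<forall>v\<in>W. \<exists>!e. e \<in> M \<and> v \<in> ends e)"

abbreviation perfect_matching ::
    "'v set \<Rightarrow> 'e set \<Rightarrow> ('e \<Rightarrow> 'v set) \<Rightarrow> 'e set \<Rightarrow> bool" where
  "perfect_matching V E ends M \<equiv> perfect_matching_on V E ends M"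

definition matching_covered :: "'v set \<Rightarrow> 'e set \<Rightarrow> ('e \<Rightarrow> 'v set) \<Rightarrow> bool" where
  "matching_covered V E ends \<longleftrightarrow> multigraph V E ends \<and> connected_graph V E ends \<and>
     card V \<ge> 2 \<and> (\<forall>e\<in>E. \<exists>M. perfect_matching V E ends M \<and> e \<in> M)"

text \<open>An even cycle of G with vertex set C: a cyclic sequence of k distinct vertices
  (k even, k \<ge> 2) joined consecutively by k distinct edges (k = 2 means two
  parallel edges).\<close>
definition even_cycle_vertices :: "'v set \<Rightarrow> 'e set \<Rightarrow> ('e \<Rightarrow> 'v set) \<Rightarrow> 'v set \<Rightarrow> bool" where
  "even_cycle_vertices V E ends C \<longleftrightarrow>
     (\<exists>vs es. length vs = length es \<and> length vs \<ge> 2 \<and> even (length vs) \<and>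
        distinct vs \<and> distinct es \<and> set vs \<subseteq> V \<and> set es \<subseteq> E \<and>
        (\<forall>i < length vs. ends (es ! i) = {vs ! i, vs ! ((i + 1) mod length vs)}) \<and>
        C = set vs)"

definition cycle_extendable :: "'v set \<Rightarrow> 'e set \<Rightarrow> ('e \<Rightarrow> 'v set) \<Rightarrow> bool" where
  "cycle_extendable V E ends \<longleftrightarrow> matching_covered V E ends \<and>
     (\<forall>C. even_cycle_vertices V E ends C \<longrightarrow>
        (\<exists>M. perfect_matching_on (V - C) E ends M))"

definition cut :: "'e set \<Rightarrow> ('e \<Rightarrow> 'v set) \<Rightarrow> 'v set \<Rightarrow> 'e set" where
  "cut E ends X = {e \<in> E. card (ends e \<inter> X) = 1}"

definition tight_cut :: "'v set \<Rightarrow> 'e set \<Rightarrow> ('e \<Rightarrow> 'v set) \<Rightarrow> 'v set \<Rightarrow> bool" where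
  "tight_cut V E ends X \<longleftrightarrow> X \<subseteq> V \<and>
     (\<forall>M. perfect_matching V E ends M \<longrightarrow> card (M \<inter> cut E ends X) = 1)"

definition nontrivial_cut :: "'v set \<Rightarrow> 'v set \<Rightarrow> bool" where
  "nontrivial_cut V X \<longleftrightarrow> card X \<ge> 2 \<and> card (V - X) \<ge> 2"

text \<open>Contraction G/X: X is shrunk to the new vertex None, other vertices v become
  Some v; edges with both ends in X are deleted, all others kept.\<close>
definition shrink :: "'v set \<Rightarrow> 'v \<Rightarrow> 'v option" where
  "shrink X v = (if v \<in> X then None else Some v)"

definition contract_V :: "'v set \<Rightarrow> 'v set \<Rightarrow> 'v option set" where
  "contract_V V X = insert None (Some ` (V - X))"

definition contract_E :: "'e set \<Rightarrow> ('e \<Rightarrow> 'v set) \<Rightarrow> 'v set \<Rightarrow> 'e set" where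
  "contract_E E ends X = {e \<in> E. \<not> ends e \<subseteq> X}"

definition contract_ends :: "('e \<Rightarrow> 'v set) \<Rightarrow> 'v set \<Rightarrow> 'e \<Rightarrow> 'v option set" where
  "contract_ends ends X e = shrink X ` ends e"

end

theory Submission
  imports Defs
begin

text \<open>
  An even cycle C of G/X avoiding the contracted vertex is an even cycle of G. A perfect
  matching of G - V(C), completed by alternate edges of C, is a perfect matching of G, so by
  tightness it has exactly one edge in the cut and contracts to a perfect matching of
  G/X - V(C).

  If C passes through the contracted vertex, let its two edges there end in x1 and x2 in X, and
  take perfect matchings M1, M2 of G containing them. By tightness they restrict to perfect
  matchings of G[X - x1] and G[X - x2], and alternating between them from x2 yields a path of
  even length in G[X] from x2 to x1. Splicing it into C gives an even cycle C' of G. The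
  matching of G - V(C') completed on C' uses a cut edge of C', so the matching of G - V(C')
  avoids the cut and contracts to a perfect matching of G/X - V(C).

  The contraction G/(V - X) is the same statement for the tight cut of V - X.
\<close>

lemma edge_other_end:
  assumes "multigraph V E ends" "e \<in> E" "v \<in> ends e"
  obtains w where "w \<noteq> v" "ends e = {v, w}"
proof -
  have "card (ends e) = 2" using assms unfolding multigraph_def by auto
  then obtain a b where "a \<noteq> b" "ends e = {a, b}" by (meson card_2_iff)
  then show ?thesis using that[of a] that[of b] assms(3) by (auto simp: insert_commute)
qed

lemma perfect_matching_onD:
  assumes "perfect_matching_on W E ends M"
  shows "M \<subseteq> E" "e \<in> M \<Longrightarrow> ends e \<subseteq> W" "v \<in> W \<Longrightarrow> \<exists>!e. e \<in> M \<and> v \<in> ends e"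
  using assms unfolding perfect_matching_on_def by auto

lemma perfect_matching_on_Un:
  assumes "perfect_matching_on A E ends M" "perfect_matching_on B E ends N" "A \<inter> B = {}"
  shows "perfect_matching_on (A \<union> B) E ends (M \<union> N)"
proof -
  have "\<forall>e\<in>N. v \<notin> ends e" if "v \<in> A" for v
    using assms that unfolding perfect_matching_on_def by blast
  moreover have "\<forall>e\<in>M. v \<notin> ends e" if "v \<in> B" for v
    using assms that unfolding perfect_matching_on_def by blast
  ultimately show ?thesis
    using assms(1,2) unfolding perfect_matching_on_def by (auto 4 3)
qed

lemma perfect_matching_on_Diff_edge:
  assumes pm: "perfect_matching_on W E ends M" and e: "e \<in> M"
  shows "perfect_matching_on (W - ends e) E ends (M - {e})"
  unfolding perfect_matching_on_def
proof (intro conjI ballI)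
  show "M - {e} \<subseteq> E" using pm unfolding perfect_matching_on_def by auto
next
  fix f assume f: "f \<in> M - {e}"
  have "ends f \<inter> ends e = {}"
    using pm e f unfolding perfect_matching_on_def by blast
  then show "ends f \<subseteq> W - ends e" using pm f unfolding perfect_matching_on_def by auto
next
  fix v assume "v \<in> W - ends e"
  then show "\<exists>!f. f \<in> M - {e} \<and> v \<in> ends f" using pm unfolding perfect_matching_on_def by auto
qed

lemma perfect_matching_on_restrict:
  assumes pm: "perfect_matching_on W E ends M" and "S \<subseteq> W"
    and closed: "\<And>f. f \<in> M \<Longrightarrow> ends f \<inter> S \<noteq> {} \<Longrightarrow> ends f \<subseteq> S"
  shows "perfect_matching_on S E ends {f \<in> M. ends f \<subseteq> S}"
  unfolding perfect_matching_on_def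
proof (intro conjI ballI)
  fix v assume "v \<in> S"
  then have "\<exists>!f. f \<in> M \<and> v \<in> ends f" using pm \<open>S \<subseteq> W\<close> unfolding perfect_matching_on_def by blast
  then show "\<exists>!f. f \<in> {f \<in> M. ends f \<subseteq> S} \<and> v \<in> ends f" using closed \<open>v \<in> S\<close> by blast
qed (use pm in \<open>auto simp: perfect_matching_on_def\<close>)

section \<open>Walks\<close>

fun walk :: "('e \<Rightarrow> 'v set) \<Rightarrow> 'v list \<Rightarrow> 'e list \<Rightarrow> bool" where
  "walk ends [v] [] \<longleftrightarrow> True"
| "walk ends (u # v # vs) (e # es) \<longleftrightarrow> ends e = {u, v} \<and> walk ends (v # vs) es"
| "walk ends _ _ \<longleftrightarrow> False"

lemma walk_singleton [simp]: "walk ends [v] es \<longleftrightarrow> es = []"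
  by (cases es) auto

lemma walk_nth_iff:
  "walk ends vs es \<longleftrightarrow>
     length vs = Suc (length es) \<and> (\<forall>i < length es. ends (es ! i) = {vs ! i, vs ! Suc i})"
  by (induction ends vs es rule: walk.induct) (auto simp: less_Suc_eq_0_disj nth_Cons')

lemma walk_length: "walk ends vs es \<Longrightarrow> length vs = Suc (length es)"
  by (simp add: walk_nth_iff)

lemma walk_append:
  "walk ends (vs @ [v]) es \<Longrightarrow> walk ends (v # ws) fs \<Longrightarrow> walk ends (vs @ v # ws) (es @ fs)"
proof (induction vs arbitrary: es)
  case (Cons u vs)
  then show ?case by (cases vs; cases es) auto
qed simp

lemma walk_join:
  assumes "walk ends (vs @ [w]) es" "walk ends (ws @ [v]) fs" "hd (ws @ [v]) = w"
  shows "walk ends (vs @ ws @ [v]) (es @ fs)"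
proof -
  have "ws @ [v] = w # tl (ws @ [v])" using assms(3) by (cases "ws @ [v]") auto
  then show ?thesis using walk_append[OF assms(1), of "tl (ws @ [v])" fs] assms(2) by simp
qed

lemma walk_split:
  assumes "walk ends (vs @ v # ws) es"
  shows "walk ends (vs @ [v]) (take (length vs) es)" "walk ends (v # ws) (drop (length vs) es)"
  using assms by (auto simp: walk_nth_iff nth_append)

lemma walk_snoc: "walk ends (vs @ [u, v]) (es @ [e]) \<longleftrightarrow> walk ends (vs @ [u]) es \<and> ends e = {u, v}"
proof
  assume w: "walk ends (vs @ [u, v]) (es @ [e])"
  then have "length es = length vs" using walk_length by fastforce
  then show "walk ends (vs @ [u]) es \<and> ends e = {u, v}"
    using walk_split[of ends vs u "[v]" "es @ [e]"] w by simp
next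
  assume "walk ends (vs @ [u]) es \<and> ends e = {u, v}"
  then show "walk ends (vs @ [u, v]) (es @ [e])" using walk_append[of ends vs u es "[v]" "[e]"] by simp
qed

lemma walk_edge_ends: "walk ends vs es \<Longrightarrow> e \<in> set es \<Longrightarrow> ends e \<subseteq> set vs"
  by (induction ends vs es rule: walk.induct) auto

lemma walk_distinct_edges: "walk ends vs es \<Longrightarrow> distinct vs \<Longrightarrow> distinct es"
proof (induction ends vs es rule: walk.induct)
  case (2 ends u v vs e es)
  then have "e \<notin> set es" using walk_edge_ends[of ends "v # vs" es e] by auto
  with 2 show ?case by simp
qed auto

lemma nths_Cons_Cons_even: "nths (x # y # xs) (Collect even) = x # nths xs (Collect even)"
  by (simp add: nths_Cons)

lemma walk_perfect_matching:
  assumes "walk ends vs es" "distinct vs" "even (length vs)" "set es \<subseteq> E"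
  shows "perfect_matching_on (set vs) E ends (set (nths es (Collect even)))"
  using assms
proof (induction vs arbitrary: es rule: induct_list012)
  case 1
  then show ?case by (simp add: perfect_matching_on_def)
next
  case (2 u)
  then show ?case by simp
next
  case (3 u v ws)
  then obtain e es' where es: "es = e # es'" "ends e = {u, v}" "walk ends (v # ws) es'"
    by (cases es) auto
  have edge: "perfect_matching_on {u, v} E ends {e}"
    using 3 es unfolding perfect_matching_on_def by auto
  show ?case
  proof (cases ws)
    case Nil
    then show ?thesis using es edge by simp
  next
    case (Cons w ws')
    then obtain f es'' where "es' = f # es''" "walk ends ws es''"
      using es(3) by (cases es') auto
    moreover have "perfect_matching_on (set ws) E ends (set (nths es'' (Collect even)))"
      using 3 calculation es by auto
    ultimately show ?thesis
      using perfect_matching_on_Un[OF edge] 3(4) es(1) by (auto simp: nths_Cons_Cons_even)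
  qed
qed

section \<open>Even cycles\<close>

definition even_cycle :: "'v set \<Rightarrow> 'e set \<Rightarrow> ('e \<Rightarrow> 'v set) \<Rightarrow> 'v list \<Rightarrow> 'e list \<Rightarrow> bool" where
  "even_cycle V E ends vs es \<longleftrightarrow> walk ends (vs @ [hd vs]) es \<and> 2 \<le> length vs \<and> even (length vs) \<and>
     distinct vs \<and> distinct es \<and> set vs \<subseteq> V \<and> set es \<subseteq> E"

lemma walk_closed_nth_iff:
  assumes "vs \<noteq> []"
  shows "walk ends (vs @ [hd vs]) es \<longleftrightarrow> length vs = length es \<and>
           (\<forall>i < length vs. ends (es ! i) = {vs ! i, vs ! ((i + 1) mod length vs)})"
proof -
  have "(vs @ [hd vs]) ! Suc i = vs ! ((i + 1) mod length vs)" if "i < length vs" for i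
  proof (cases "Suc i < length vs")
    case False
    then have "Suc i = length vs" using that by simp
    then show ?thesis using assms by (simp add: nth_append hd_conv_nth)
  qed (simp add: nth_append)
  then show ?thesis by (auto simp: walk_nth_iff nth_append)
qed

lemma even_cycle_vertices_iff:
  "even_cycle_vertices V E ends C \<longleftrightarrow> (\<exists>vs es. even_cycle V E ends vs es \<and> C = set vs)"
proof -
  have "(length vs = length es \<and> 2 \<le> length vs \<and> even (length vs) \<and> distinct vs \<and> distinct es \<and>
         set vs \<subseteq> V \<and> set es \<subseteq> E \<and>
         (\<forall>i < length vs. ends (es ! i) = {vs ! i, vs ! ((i + 1) mod length vs)}) \<and> C = set vs)
        \<longleftrightarrow> even_cycle V E ends vs es \<and> C = set vs" for vs es
    using walk_closed_nth_iff[of vs ends es] unfolding even_cycle_def by (cases vs) auto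
  then show ?thesis unfolding even_cycle_vertices_def by presburger
qed

lemma even_cycle_rotate:
  assumes cyc: "even_cycle V E ends vs es" and "v \<in> set vs"
  obtains vs' es' where "even_cycle V E ends vs' es'" "set vs' = set vs" "hd vs' = v"
proof -
  obtain as bs where vs: "vs = as @ v # bs" using \<open>v \<in> set vs\<close> by (meson split_list)
  show ?thesis
  proof (cases as)
    case Nil
    then show ?thesis using that cyc vs by simp
  next
    case (Cons a as')
    let ?es1 = "take (length as) es" and ?es2 = "drop (length as) es"
    have "walk ends (as @ v # bs @ [a]) es" using cyc vs Cons unfolding even_cycle_def by simp
    then have "walk ends (as @ [v]) ?es1" "walk ends (v # bs @ [a]) ?es2"
      using walk_split by fastforce+
    then have "walk ends ((v # bs) @ a # as' @ [v]) (?es2 @ ?es1)"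
      using walk_append[of ends "v # bs" a ?es2] Cons by simp
    moreover have "distinct (ys @ xs) \<and> set (ys @ xs) = set (xs @ ys)" if "distinct (xs @ ys)" for xs ys :: "'b list"
      using that by auto
    then have "distinct (?es2 @ ?es1)" "set (?es2 @ ?es1) = set es"
      using cyc unfolding even_cycle_def by (metis append_take_drop_id)+
    ultimately have "even_cycle V E ends (v # bs @ as) (?es2 @ ?es1)"
      using cyc vs Cons unfolding even_cycle_def by auto
    then show ?thesis by (rule that) (auto simp: vs)
  qed
qed

lemma even_cycle_perfect_matching:
  assumes cyc: "even_cycle V E ends vs es"
  obtains M where "perfect_matching_on (set vs) E ends M" "hd es \<in> M"
proof -
  let ?path = "take (length vs - 1) es"
  have "vs \<noteq> []" using cyc unfolding even_cycle_def by auto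
  then have vs: "vs = butlast vs @ [last vs]" "length (butlast vs) = length vs - 1"
    by simp_all
  then have "walk ends (butlast vs @ last vs # [hd vs]) es"
    using cyc unfolding even_cycle_def by (metis append.assoc append_Cons append_Nil)
  then have "walk ends vs ?path"
    using walk_split(1) vs by metis
  moreover have "set ?path \<subseteq> E"
    using cyc set_take_subset unfolding even_cycle_def by fast
  ultimately have "perfect_matching_on (set vs) E ends (set (nths ?path (Collect even)))"
    using walk_perfect_matching cyc unfolding even_cycle_def by blast
  moreover have "hd es \<in> set (nths ?path (Collect even))"
  proof -
    obtain e es' where es: "es = e # es'"
      using cyc walk_length unfolding even_cycle_def by (cases es) fastforce+
    have "length vs - 1 = Suc (length vs - 2)" using cyc unfolding even_cycle_def by auto
    then have "?path = e # take (length vs - 2) es'" unfolding es by simp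
    then show ?thesis unfolding es by (simp add: nths_Cons)
  qed
  ultimately show ?thesis using that by blast
qed

lemma cycle_extendable_even_cycle_matching:
  assumes ce: "cycle_extendable V E ends" and cyc: "even_cycle V E ends vs es"
  obtains N M where "perfect_matching_on (V - set vs) E ends N"
    "perfect_matching_on (set vs) E ends M" "hd es \<in> M" "perfect_matching V E ends (N \<union> M)"
proof -
  obtain N where N: "perfect_matching_on (V - set vs) E ends N"
    using ce cyc unfolding cycle_extendable_def even_cycle_vertices_iff by blast
  obtain M where M: "perfect_matching_on (set vs) E ends M" "hd es \<in> M"
    using even_cycle_perfect_matching[OF cyc] by blast
  have "V - set vs \<union> set vs = V" using cyc unfolding even_cycle_def by auto
  then have "perfect_matching V E ends (N \<union> M)"
    using perfect_matching_on_Un[OF N M(1)] by auto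
  with N M show ?thesis using that by blast
qed

section \<open>Tight cuts\<close>

lemma mem_cut_iff:
  assumes "multigraph V E ends" "f \<in> E"
  shows "f \<in> cut E ends X \<longleftrightarrow> ends f \<inter> X \<noteq> {} \<and> \<not> ends f \<subseteq> X"
proof -
  have "card (ends f) = 2" using assms unfolding multigraph_def by auto
  then obtain a b where "a \<noteq> b" "ends f = {a, b}" by (meson card_2_iff)
  then show ?thesis using assms(2) unfolding cut_def by (cases "a \<in> X"; cases "b \<in> X") auto
qed

lemma tight_cut_complement:
  assumes mg: "multigraph V E ends" and tc: "tight_cut V E ends X"
  shows "tight_cut V E ends (V - X)"
proof -
  have "f \<in> cut E ends (V - X) \<longleftrightarrow> f \<in> cut E ends X" for f
  proof (cases "f \<in> E")
    case True
    then have "ends f \<subseteq> V" using mg unfolding multigraph_def by auto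
    then show ?thesis using mem_cut_iff[OF mg True, of X] mem_cut_iff[OF mg True, of "V - X"] by auto
  qed (simp add: cut_def)
  then have "cut E ends (V - X) = cut E ends X" by blast
  then show ?thesis using tc unfolding tight_cut_def by auto
qed

lemma tight_cut_single_cut_edge:
  assumes "tight_cut V E ends X" "perfect_matching V E ends M" "e \<in> M \<inter> cut E ends X"
  shows "M \<inter> cut E ends X = {e}"
proof -
  obtain c where "M \<inter> cut E ends X = {c}"
    using assms(1,2) unfolding tight_cut_def by (meson card_1_singletonE)
  then show ?thesis using assms(3) by auto
qed

lemma tight_cut_perfect_matching_side:
  assumes mg: "multigraph V E ends" and tc: "tight_cut V E ends X"
    and pm: "perfect_matching V E ends M" and e: "e \<in> M" "ends e = {x, u}" "x \<in> X" "u \<notin> X"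
  shows "perfect_matching_on (X - {x}) E ends {f \<in> M. ends f \<subseteq> X - {x}}"
proof (rule perfect_matching_on_restrict[OF pm])
  have XV: "X \<subseteq> V" using tc unfolding tight_cut_def by auto
  then show "X - {x} \<subseteq> V" by auto
  have ME: "M \<subseteq> E" using perfect_matching_onD(1)[OF pm] .
  have "e \<in> cut E ends X" using mem_cut_iff[OF mg, of e X] ME e by auto
  then have cutM: "M \<inter> cut E ends X = {e}" using tight_cut_single_cut_edge[OF tc pm] e(1) by blast
  have x_unique: "\<exists>!g. g \<in> M \<and> x \<in> ends g" using perfect_matching_onD(3)[OF pm] XV e(3) by blast
  fix f assume f: "f \<in> M" "ends f \<inter> (X - {x}) \<noteq> {}"
  have "ends f \<subseteq> X"
  proof (rule ccontr)
    assume "\<not> ends f \<subseteq> X"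
    then have "f = e" using cutM mem_cut_iff[OF mg, of f X] f ME by auto
    then show False using f(2) e by auto
  qed
  moreover have "x \<notin> ends f"
  proof
    assume "x \<in> ends f"
    then have "f = e" using x_unique f(1) e by auto
    then show False using \<open>ends f \<subseteq> X\<close> e by auto
  qed
  ultimately show "ends f \<subseteq> X - {x}" by auto
qed

text \<open>Take the M1-edge x2 y and the M2-edge y w: deleting x2 and y leaves the same situation
  for w and x1, on a smaller set.\<close>

lemma near_perfect_matchings_even_path:
  assumes mg: "multigraph V E ends" and "finite X" "x1 \<in> X" "x2 \<in> X"
    and "perfect_matching_on (X - {x1}) E ends M1" "perfect_matching_on (X - {x2}) E ends M2"
  shows "\<exists>zs ps. walk ends (zs @ [x1]) ps \<and> hd (zs @ [x1]) = x2 \<and> distinct (zs @ [x1]) \<and>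
           set (zs @ [x1]) \<subseteq> X \<and> set ps \<subseteq> E \<and> even (length ps)"
  using assms(2-)
proof (induction "card X" arbitrary: X x2 M1 M2 rule: less_induct)
  case less
  show ?case
  proof (cases "x1 = x2")
    case True
    then show ?thesis using less.prems by (intro exI[of _ "[]"]) auto
  next
    case False
    then have "x2 \<in> X - {x1}" using less.prems(3) by simp
    then obtain f where f: "f \<in> M1" "x2 \<in> ends f"
      using perfect_matching_onD(3)[OF less.prems(4)] by blast
    then have f_sub: "f \<in> E" "ends f \<subseteq> X - {x1}" using perfect_matching_onD[OF less.prems(4)] by auto
    obtain y where y: "y \<noteq> x2" "ends f = {x2, y}" using edge_other_end[OF mg f_sub(1) f(2)] .
    then have "y \<in> X - {x2}" using f_sub by auto
    then obtain g where g: "g \<in> M2" "y \<in> ends g"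
      using perfect_matching_onD(3)[OF less.prems(5)] by blast
    then have g_sub: "g \<in> E" "ends g \<subseteq> X - {x2}" using perfect_matching_onD[OF less.prems(5)] by auto
    obtain w where w: "w \<noteq> y" "ends g = {y, w}" using edge_other_end[OF mg g_sub(1) g(2)] .
    let ?X = "X - {x2, y}"
    have "perfect_matching_on (X - {x1} - ends f) E ends (M1 - {f})"
      using less.prems(4) f(1) by (rule perfect_matching_on_Diff_edge)
    moreover have "perfect_matching_on (X - {x2} - ends g) E ends (M2 - {g})"
      using less.prems(5) g(1) by (rule perfect_matching_on_Diff_edge)
    moreover have "X - {x1} - ends f = ?X - {x1}" "X - {x2} - ends g = ?X - {w}"
      using y w by auto
    moreover have "card ?X < card X"
      using less.prems(1,3) by (intro psubset_card_mono) auto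
    moreover have "x1 \<in> ?X" "w \<in> ?X" "finite ?X"
      using less.prems(1,2) f_sub g_sub y w False by auto
    ultimately obtain zs ps where
      path: "walk ends (zs @ [x1]) ps" "hd (zs @ [x1]) = w" "distinct (zs @ [x1])"
        "set (zs @ [x1]) \<subseteq> ?X" "set ps \<subseteq> E" "even (length ps)"
      using less.hyps[of ?X w "M1 - {f}" "M2 - {g}"] by metis
    then have "walk ends (x2 # y # zs @ [x1]) (f # g # ps)"
      using y w by (cases "zs @ [x1]") auto
    then show ?thesis
      using path y f_sub g_sub less.prems(2,3)
      by (intro exI[of _ "x2 # y # zs"] exI[of _ "f # g # ps"]) auto
  qed
qed

lemma tight_cut_even_path:
  assumes mc: "matching_covered V E ends" and tc: "tight_cut V E ends X"
    and e1: "e1 \<in> E" "ends e1 = {x1, u1}" "x1 \<in> X" "u1 \<notin> X"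
    and e2: "e2 \<in> E" "ends e2 = {x2, u2}" "x2 \<in> X" "u2 \<notin> X"
  shows "\<exists>zs ps. walk ends (zs @ [x1]) ps \<and> hd (zs @ [x1]) = x2 \<and> distinct (zs @ [x1]) \<and>
           set (zs @ [x1]) \<subseteq> X \<and> set ps \<subseteq> E \<and> even (length ps)"
proof -
  have mg: "multigraph V E ends" using mc unfolding matching_covered_def by simp
  have "X \<subseteq> V" using tc unfolding tight_cut_def by simp
  then have "finite X" using mg unfolding multigraph_def by (auto intro: finite_subset)
  obtain M1 M2 where M1: "perfect_matching V E ends M1" "e1 \<in> M1"
    and M2: "perfect_matching V E ends M2" "e2 \<in> M2"
    using mc e1(1) e2(1) unfolding matching_covered_def by metis
  show ?thesis
    using near_perfect_matchings_even_path[OF mg \<open>finite X\<close> e1(3) e2(3)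
        tight_cut_perfect_matching_side[OF mg tc M1 e1(2-4)]
        tight_cut_perfect_matching_side[OF mg tc M2 e2(2-4)]] .
qed

section \<open>Contraction\<close>

lemma None_in_shrink_iff: "None \<in> shrink X ` S \<longleftrightarrow> S \<inter> X \<noteq> {}"
  unfolding shrink_def by force

lemma Some_in_shrink_iff: "Some v \<in> shrink X ` S \<longleftrightarrow> v \<in> S \<and> v \<notin> X"
  unfolding shrink_def by force

lemma ex_map_Some_iff: "(\<exists>ys. xs = map Some ys) \<longleftrightarrow> None \<notin> set xs"
  by (metis ex_map_conv not_None_eq)

lemma contract_ends_Some_Some:
  assumes "contract_ends ends X f = {Some a, Some b}"
  shows "ends f = {a, b}"
proof -
  have "ends f \<inter> X = {}"
    using assms None_in_shrink_iff[of X "ends f"] unfolding contract_ends_def by auto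
  then have "shrink X ` ends f = Some ` ends f" unfolding shrink_def by auto
  then have "Some ` ends f = Some ` {a, b}"
    using assms unfolding contract_ends_def by simp
  then show ?thesis by (rule inj_image_eq_iff[THEN iffD1, OF inj_Some])
qed

lemma contract_ends_None_Some:
  assumes mg: "multigraph V E ends" and "f \<in> E" and ends_f: "contract_ends ends X f = {None, Some u}"
  obtains x where "x \<in> X" "ends f = {u, x}" "u \<notin> X"
proof -
  have u: "u \<in> ends f" "u \<notin> X" using ends_f Some_in_shrink_iff[of u X "ends f"] unfolding contract_ends_def by auto
  obtain x where x: "x \<noteq> u" "ends f = {u, x}" using edge_other_end[OF mg \<open>f \<in> E\<close> u(1)] .
  have "ends f \<inter> X \<noteq> {}" using ends_f None_in_shrink_iff[of X "ends f"] unfolding contract_ends_def by auto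
  then have "x \<in> X" using x u by auto
  then show ?thesis using that x u by blast
qed

lemma walk_contract_Some:
  "walk (contract_ends ends X) (map Some us) es \<Longrightarrow> walk ends us es"
proof (induction "contract_ends ends X" "map Some us" es arbitrary: us rule: walk.induct)
  case (2 u v vs e es)
  then obtain a b us' where "us = a # b # us'" "u = Some a" "v = Some b" "vs = map Some us'"
    by (auto simp: map_eq_Cons_conv)
  with 2 show ?case using contract_ends_Some_Some[of ends X e a b] by auto
qed (auto simp: map_eq_Cons_conv)

lemma multigraph_contract:
  assumes mg: "multigraph V E ends"
  shows "multigraph (contract_V V X) (contract_E E ends X) (contract_ends ends X)"
  unfolding multigraph_def
proof (intro conjI ballI)
  show "finite (contract_V V X)" "finite (contract_E E ends X)"
    using mg unfolding multigraph_def contract_V_def contract_E_def by auto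
next
  fix e assume e: "e \<in> contract_E E ends X"
  then have "card (ends e) = 2" "ends e \<subseteq> V" "\<not> ends e \<subseteq> X"
    using mg unfolding multigraph_def contract_E_def by auto
  then obtain a b where ab: "a \<noteq> b" "ends e = {a, b}" "a \<in> V" "b \<in> V" "\<not> {a, b} \<subseteq> X"
    by (metis card_2_iff insert_subset)
  then show "contract_ends ends X e \<subseteq> contract_V V X"
    unfolding contract_ends_def contract_V_def shrink_def by auto
  have "shrink X a \<noteq> shrink X b" using ab unfolding shrink_def by auto
  then show "card (contract_ends ends X e) = 2" unfolding contract_ends_def ab by simp
qed

lemma adjacent_contract:
  assumes "(a, b) \<in> (adjacent V E ends)\<^sup>*"
  shows "(shrink X a, shrink X b) \<in> (adjacent (contract_V V X) (contract_E E ends X) (contract_ends ends X))\<^sup>*"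
  using assms
proof (induction rule: rtrancl_induct)
  case (step b c)
  then obtain e where bc: "b \<in> V" "c \<in> V" "e \<in> E" "ends e = {b, c}"
    unfolding adjacent_def by auto
  show ?case
  proof (cases "b \<in> X \<and> c \<in> X")
    case True
    then show ?thesis using step.IH unfolding shrink_def by simp
  next
    case False
    then have "e \<in> contract_E E ends X" "contract_ends ends X e = {shrink X b, shrink X c}"
      using bc unfolding contract_E_def contract_ends_def by auto
    moreover have "shrink X b \<in> contract_V V X" "shrink X c \<in> contract_V V X"
      using bc unfolding contract_V_def shrink_def by auto
    ultimately have "(shrink X b, shrink X c) \<in> adjacent (contract_V V X) (contract_E E ends X) (contract_ends ends X)"
      unfolding adjacent_def by blast
    with step.IH show ?thesis by (rule rtrancl_into_rtrancl)
  qed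
qed simp

lemma connected_graph_contract:
  assumes cg: "connected_graph V E ends" and "X \<subseteq> V" "X \<noteq> {}"
  shows "connected_graph (contract_V V X) (contract_E E ends X) (contract_ends ends X)"
  unfolding connected_graph_def
proof (intro conjI ballI)
  show "contract_V V X \<noteq> {}" by (simp add: contract_V_def)
  have V: "contract_V V X = shrink X ` V"
    using assms(2,3) unfolding contract_V_def shrink_def by auto
  fix s t assume "s \<in> contract_V V X" "t \<in> contract_V V X"
  then obtain a b where "a \<in> V" "b \<in> V" "s = shrink X a" "t = shrink X b" unfolding V by blast
  then show "(s, t) \<in> (adjacent (contract_V V X) (contract_E E ends X) (contract_ends ends X))\<^sup>*"
    using cg adjacent_contract[of a b V E ends X] unfolding connected_graph_def by blast
qed

lemma perfect_matching_on_contract: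
  fixes X :: "'v set"
  assumes mg: "multigraph V E ends" and pm: "perfect_matching_on W E ends N"
  defines "N' \<equiv> {f \<in> N. \<not> ends f \<subseteq> X}"
  shows perfect_matching_on_contract_no_cut_edge:
      "N \<inter> cut E ends X = {} \<Longrightarrow>
         perfect_matching_on (Some ` (W - X)) (contract_E E ends X) (contract_ends ends X) N'"
    and perfect_matching_on_contract_one_cut_edge:
      "card (N \<inter> cut E ends X) = 1 \<Longrightarrow>
         perfect_matching_on (insert None (Some ` (W - X))) (contract_E E ends X) (contract_ends ends X) N'"
proof -
  have NE: "N \<subseteq> E" using perfect_matching_onD(1)[OF pm] .
  then have N'E: "N' \<subseteq> contract_E E ends X" unfolding N'_def contract_E_def by auto
  have Some_unique: "\<exists>!f. f \<in> N' \<and> Some v \<in> contract_ends ends X f" if "v \<in> W - X" for v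
  proof -
    have "f \<in> N' \<and> Some v \<in> contract_ends ends X f \<longleftrightarrow> f \<in> N \<and> v \<in> ends f" for f
      using that unfolding N'_def contract_ends_def Some_in_shrink_iff by auto
    then show ?thesis using perfect_matching_onD(3)[OF pm, of v] that by simp
  qed
  have None_iff: "f \<in> N' \<and> None \<in> contract_ends ends X f \<longleftrightarrow> f \<in> N \<inter> cut E ends X" for f
    using NE mem_cut_iff[OF mg, of f X] unfolding N'_def contract_ends_def None_in_shrink_iff by auto
  have ends_N': "contract_ends ends X f \<subseteq> insert None (Some ` (W - X))" if "f \<in> N'" for f
    using perfect_matching_onD(2)[OF pm, of f] that
    unfolding N'_def contract_ends_def shrink_def by auto
  show "perfect_matching_on (Some ` (W - X)) (contract_E E ends X) (contract_ends ends X) N'"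
    if no_cut: "N \<inter> cut E ends X = {}"
    unfolding perfect_matching_on_def
  proof (intro conjI ballI N'E)
    fix f assume "f \<in> N'"
    then have "None \<notin> contract_ends ends X f" using None_iff no_cut by blast
    then show "contract_ends ends X f \<subseteq> Some ` (W - X)" using ends_N'[OF \<open>f \<in> N'\<close>] by blast
  next
    fix t assume "t \<in> Some ` (W - X)"
    then show "\<exists>!f. f \<in> N' \<and> t \<in> contract_ends ends X f" using Some_unique by blast
  qed
  show "perfect_matching_on (insert None (Some ` (W - X))) (contract_E E ends X) (contract_ends ends X) N'"
    if one_cut: "card (N \<inter> cut E ends X) = 1"
    unfolding perfect_matching_on_def
  proof (intro conjI ballI N'E ends_N')
    obtain c where "N \<inter> cut E ends X = {c}" using one_cut by (rule card_1_singletonE)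
    then have "\<exists>!f. f \<in> N' \<and> None \<in> contract_ends ends X f" using None_iff by auto
    then show "\<exists>!f. f \<in> N' \<and> t \<in> contract_ends ends X f" if "t \<in> insert None (Some ` (W - X))" for t
      using that Some_unique by blast
  qed
qed

lemma matching_covered_contract:
  assumes mc: "matching_covered V E ends" and tc: "tight_cut V E ends X"
    and "X \<noteq> {}" "V - X \<noteq> {}"
  shows "matching_covered (contract_V V X) (contract_E E ends X) (contract_ends ends X)"
  unfolding matching_covered_def
proof (intro conjI ballI)
  have mg: "multigraph V E ends" using mc unfolding matching_covered_def by simp
  then show mg': "multigraph (contract_V V X) (contract_E E ends X) (contract_ends ends X)"
    by (rule multigraph_contract)
  show "connected_graph (contract_V V X) (contract_E E ends X) (contract_ends ends X)"
    using mc tc \<open>X \<noteq> {}\<close> connected_graph_contract unfolding matching_covered_def tight_cut_def by blast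
  obtain v where "v \<in> V - X" using \<open>V - X \<noteq> {}\<close> by blast
  then have "{None, Some v} \<subseteq> contract_V V X" unfolding contract_V_def by auto
  moreover have "finite (contract_V V X)" using mg' unfolding multigraph_def by simp
  ultimately show "2 \<le> card (contract_V V X)" using card_mono[of "contract_V V X" "{None, Some v}"] by simp
  fix e assume e: "e \<in> contract_E E ends X"
  then obtain M where M: "perfect_matching V E ends M" "e \<in> M"
    using mc unfolding matching_covered_def contract_E_def by blast
  then have "card (M \<inter> cut E ends X) = 1" using tc unfolding tight_cut_def by blast
  then have "perfect_matching (contract_V V X) (contract_E E ends X) (contract_ends ends X)
      {f \<in> M. \<not> ends f \<subseteq> X}"
    unfolding contract_V_def by (rule perfect_matching_on_contract_one_cut_edge[OF mg M(1)])
  then show "\<exists>M. perfect_matching (contract_V V X) (contract_E E ends X) (contract_ends ends X) M \<and> e \<in> M"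
    using M(2) e unfolding contract_E_def by blast
qed

section \<open>Lifting even cycles of the contraction\<close>

lemma contract_even_cycle_Some:
  assumes "even_cycle (contract_V V X) (contract_E E ends X) (contract_ends ends X) (map Some us) es"
  shows "even_cycle V E ends us es" "set us \<subseteq> V - X"
proof -
  have "us \<noteq> []" using assms unfolding even_cycle_def by auto
  then have "walk ends (us @ [hd us]) es"
    using assms walk_contract_Some[of ends X "us @ [hd us]" es]
    unfolding even_cycle_def by (simp add: hd_map)
  moreover show us: "set us \<subseteq> V - X"
    using assms unfolding even_cycle_def contract_V_def by auto
  ultimately show "even_cycle V E ends us es"
    using assms unfolding even_cycle_def contract_E_def by (auto simp: distinct_map)
qed

lemma cycle_extendable_contract_cycle_avoiding_None:
  assumes ce: "cycle_extendable V E ends" and tc: "tight_cut V E ends X"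
    and cyc: "even_cycle (contract_V V X) (contract_E E ends X) (contract_ends ends X) vs es"
    and "None \<notin> set vs"
  shows "\<exists>M. perfect_matching_on (contract_V V X - set vs) (contract_E E ends X) (contract_ends ends X) M"
proof -
  have mg: "multigraph V E ends" using ce unfolding cycle_extendable_def matching_covered_def by simp
  obtain us where vs: "vs = map Some us"
    using \<open>None \<notin> set vs\<close> ex_map_Some_iff by blast
  have cyc_us: "even_cycle V E ends us es" and us: "set us \<subseteq> V - X"
    using contract_even_cycle_Some cyc unfolding vs by blast+
  obtain N M where N: "perfect_matching_on (V - set us) E ends N"
    and M: "perfect_matching_on (set us) E ends M" and NM: "perfect_matching V E ends (N \<union> M)"
    using cycle_extendable_even_cycle_matching[OF ce cyc_us] by metis
  have "ends f \<inter> X = {}" if "f \<in> M" for f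
    using perfect_matching_onD(2)[OF M that] us by auto
  then have "M \<inter> cut E ends X = {}" unfolding cut_def by auto
  moreover have "card ((N \<union> M) \<inter> cut E ends X) = 1" using tc NM unfolding tight_cut_def by blast
  ultimately have "card (N \<inter> cut E ends X) = 1" by (simp add: Int_Un_distrib2)
  then have "perfect_matching_on (insert None (Some ` (V - set us - X))) (contract_E E ends X)
      (contract_ends ends X) {f \<in> N. \<not> ends f \<subseteq> X}"
    by (rule perfect_matching_on_contract_one_cut_edge[OF mg N])
  moreover have "contract_V V X - set vs = insert None (Some ` (V - set us - X))"
    unfolding vs contract_V_def by auto
  ultimately show ?thesis by auto
qed

lemma contract_even_cycle_None:
  assumes mg: "multigraph V E ends"
    and cyc: "even_cycle (contract_V V X) (contract_E E ends X) (contract_ends ends X) (None # map Some us) es"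
  obtains x1 x2 where "x1 \<in> X" "x2 \<in> X" "walk ends (x1 # us @ [x2]) es"
    "ends (hd es) = {x1, hd us}" "ends (last es) = {last us, x2}"
proof -
  let ?ends = "contract_ends ends X"
  have us: "us \<noteq> []" using cyc unfolding even_cycle_def by auto
  have us_map: "map Some us = Some (hd us) # map Some (tl us)" using us by (cases us) auto
  have "walk ?ends (None # Some (hd us) # map Some (tl us) @ [None]) es"
    using cyc us unfolding even_cycle_def by (cases us) auto
  then obtain e1 es' where es: "es = e1 # es'" and e1: "?ends e1 = {None, Some (hd us)}"
    and es': "walk ?ends (map Some us @ [None]) es'"
    by (cases es) (auto simp: us_map)
  have "es' \<noteq> []" using walk_length[OF es'] us by auto
  then obtain mid e2 where es'_split: "es' = mid @ [e2]" by (cases es' rule: rev_cases) auto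
  have us_snoc: "map Some us = map Some (butlast us) @ [Some (last us)]"
    using us by (induction us rule: rev_induct) auto
  then have "walk ?ends (map Some (butlast us) @ [Some (last us), None]) (mid @ [e2])"
    using es' unfolding es'_split by simp
  then have mid: "walk ?ends (map Some us) mid" and e2: "?ends e2 = {None, Some (last us)}"
    unfolding walk_snoc us_snoc by (auto simp: insert_commute)
  have "e1 \<in> E" "e2 \<in> E" using cyc es es'_split unfolding even_cycle_def contract_E_def by auto
  obtain x1 where x1: "x1 \<in> X" "ends e1 = {hd us, x1}"
    using contract_ends_None_Some[OF mg \<open>e1 \<in> E\<close> e1] by blast
  obtain x2 where x2: "x2 \<in> X" "ends e2 = {last us, x2}"
    using contract_ends_None_Some[OF mg \<open>e2 \<in> E\<close> e2] by blast
  have "butlast us @ [last us, x2] = us @ [x2]"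
    using append_butlast_last_id[OF us] by (metis append.assoc append_Cons append_Nil)
  moreover have "walk ends (butlast us @ [last us, x2]) (mid @ [e2])"
    using walk_contract_Some[OF mid] x2 us unfolding walk_snoc by simp
  ultimately have "walk ends (us @ [x2]) (mid @ [e2])" by (simp only:)
  then have "walk ends (x1 # us @ [x2]) (e1 # mid @ [e2])"
    using x1 us by (cases us) (auto simp: insert_commute)
  then show ?thesis using that x1 x2 us unfolding es es'_split by (auto simp: insert_commute)
qed

lemma even_cycle_splice_path:
  assumes cyc: "even_cycle (contract_V V X) (contract_E E ends X) (contract_ends ends X) (None # map Some us) es"
    and walk_es: "walk ends (x1 # us @ [x2]) es" and "x1 \<in> X" "X \<subseteq> V"
    and path: "walk ends (zs @ [x1]) ps" "hd (zs @ [x1]) = x2" "distinct (zs @ [x1])"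
      "set (zs @ [x1]) \<subseteq> X" "set ps \<subseteq> E" "even (length ps)"
  shows "even_cycle V E ends (x1 # us @ zs) (es @ ps)"
proof -
  have us: "set us \<subseteq> V - X" "distinct us" "odd (length us)"
    using cyc unfolding even_cycle_def contract_V_def by (auto simp: distinct_map)
  have es: "set es \<subseteq> E" "distinct es" "\<forall>e\<in>set es. \<not> ends e \<subseteq> X"
    using cyc unfolding even_cycle_def contract_E_def by auto
  have "walk ends ((x1 # us @ zs) @ [hd (x1 # us @ zs)]) (es @ ps)"
    using walk_join[of ends "x1 # us" x2 es zs x1 ps] walk_es path(1,2) by simp
  moreover have "length zs = length ps" using walk_length[OF path(1)] by simp
  moreover have "2 \<le> length (x1 # us @ zs)"
    using odd_pos[OF us(3)] by (simp del: length_greater_0_conv)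
  moreover have "distinct (x1 # us @ zs)" using us path(3,4) \<open>x1 \<in> X\<close> by auto
  moreover have "set es \<inter> set ps = {}"
    using es(3) walk_edge_ends[OF path(1)] path(4) by blast
  then have "distinct (es @ ps)" using es(2) walk_distinct_edges[OF path(1,3)] by simp
  ultimately show ?thesis
    using us es path(4-6) \<open>x1 \<in> X\<close> \<open>X \<subseteq> V\<close> unfolding even_cycle_def by auto
qed

lemma cycle_extendable_contract_cycle_through_None:
  assumes ce: "cycle_extendable V E ends" and tc: "tight_cut V E ends X"
    and cyc: "even_cycle (contract_V V X) (contract_E E ends X) (contract_ends ends X) (None # map Some us) es"
  shows "\<exists>M. perfect_matching_on (contract_V V X - set (None # map Some us))
           (contract_E E ends X) (contract_ends ends X) M"
proof -
  have mc: "matching_covered V E ends" using ce unfolding cycle_extendable_def by simp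
  then have mg: "multigraph V E ends" unfolding matching_covered_def by simp
  have XV: "X \<subseteq> V" using tc unfolding tight_cut_def by simp
  have us: "us \<noteq> []" "set us \<subseteq> V - X" using cyc unfolding even_cycle_def contract_V_def by auto
  then have "hd us \<notin> X" "last us \<notin> X" using hd_in_set last_in_set by blast+
  obtain x1 x2 where x: "x1 \<in> X" "x2 \<in> X" and walk_es: "walk ends (x1 # us @ [x2]) es"
    and first: "ends (hd es) = {x1, hd us}" and last: "ends (last es) = {x2, last us}"
    using contract_even_cycle_None[OF mg cyc] by (metis insert_commute)
  have "es \<noteq> []" using walk_length[OF walk_es] by auto
  moreover have "set es \<subseteq> E" using cyc unfolding even_cycle_def contract_E_def by auto
  ultimately have hd_E: "hd es \<in> E" and last_E: "last es \<in> E" by auto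
  obtain zs ps where path: "walk ends (zs @ [x1]) ps" "hd (zs @ [x1]) = x2" "distinct (zs @ [x1])"
      "set (zs @ [x1]) \<subseteq> X" "set ps \<subseteq> E" "even (length ps)"
    using tight_cut_even_path[OF mc tc hd_E first x(1) \<open>hd us \<notin> X\<close> last_E last x(2) \<open>last us \<notin> X\<close>]
    by blast
  let ?C = "x1 # us @ zs"
  have "even_cycle V E ends ?C (es @ ps)"
    using even_cycle_splice_path[OF cyc walk_es x(1) XV path] .
  then obtain N M where N: "perfect_matching_on (V - set ?C) E ends N"
    and "hd es \<in> M" and NM: "perfect_matching V E ends (N \<union> M)"
    using cycle_extendable_even_cycle_matching[OF ce] \<open>es \<noteq> []\<close> by (metis hd_append2)
  txt \<open>The cut edge of the completed matching lies on the cycle, so N avoids the cut.\<close>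
  have "hd es \<in> cut E ends X"
    using mem_cut_iff[OF mg hd_E] first x(1) \<open>hd us \<notin> X\<close> by auto
  then have "hd es \<in> (N \<union> M) \<inter> cut E ends X" using \<open>hd es \<in> M\<close> by blast
  then have "(N \<union> M) \<inter> cut E ends X = {hd es}" by (rule tight_cut_single_cut_edge[OF tc NM])
  then have "N \<inter> cut E ends X \<subseteq> {hd es}" by (metis Int_Un_distrib2 Un_upper1)
  moreover have "hd es \<notin> N" using perfect_matching_onD(2)[OF N] first by auto
  ultimately have "N \<inter> cut E ends X = {}" by auto
  then have "perfect_matching_on (Some ` (V - set ?C - X)) (contract_E E ends X)
      (contract_ends ends X) {f \<in> N. \<not> ends f \<subseteq> X}"
    by (rule perfect_matching_on_contract_no_cut_edge[OF mg N])
  moreover have "contract_V V X - set (None # map Some us) = Some ` (V - set ?C - X)"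
    using x(1) path(4) unfolding contract_V_def by auto
  ultimately show ?thesis by auto
qed

lemma cycle_extendable_contract:
  assumes ce: "cycle_extendable V E ends" and tc: "tight_cut V E ends X"
    and "X \<noteq> {}" "V - X \<noteq> {}"
  shows "cycle_extendable (contract_V V X) (contract_E E ends X) (contract_ends ends X)"
  unfolding cycle_extendable_def
proof (intro conjI allI impI)
  show "matching_covered (contract_V V X) (contract_E E ends X) (contract_ends ends X)"
    using ce tc assms(3,4) matching_covered_contract unfolding cycle_extendable_def by blast
  fix C assume "even_cycle_vertices (contract_V V X) (contract_E E ends X) (contract_ends ends X) C"
  then obtain vs es where cyc: "even_cycle (contract_V V X) (contract_E E ends X) (contract_ends ends X) vs es"
    and C: "C = set vs" unfolding even_cycle_vertices_iff by blast
  show "\<exists>M. perfect_matching_on (contract_V V X - C) (contract_E E ends X) (contract_ends ends X) M"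
  proof (cases "None \<in> set vs")
    case True
    then obtain vs' es' where cyc': "even_cycle (contract_V V X) (contract_E E ends X) (contract_ends ends X) vs' es'"
      and set_vs': "set vs' = set vs" and "hd vs' = None"
      using even_cycle_rotate[OF cyc] by metis
    then have "vs' = None # tl vs'" "None \<notin> set (tl vs')"
      unfolding even_cycle_def by (cases vs'; auto)+
    then obtain us where vs': "vs' = None # map Some us" using ex_map_Some_iff by metis
    show ?thesis
      using cycle_extendable_contract_cycle_through_None[OF ce tc cyc'[unfolded vs']] C set_vs' vs' by simp
  next
    case False
    then show ?thesis using cycle_extendable_contract_cycle_avoiding_None[OF ce tc cyc] C by simp
  qed
qed

theorem lemma2p4:
  fixes V :: "'v set" and E :: "'e set" and ends :: "'e \<Rightarrow> 'v set" and X :: "'v set"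
  assumes "matching_covered V E ends"
    and "tight_cut V E ends X"
    and "nontrivial_cut V X"
    and "cycle_extendable V E ends"
  shows "cycle_extendable (contract_V V X) (contract_E E ends X) (contract_ends ends X)
       \<and> cycle_extendable (contract_V V (V - X)) (contract_E E ends (V - X))
                          (contract_ends ends (V - X))"
proof
  have mg: "multigraph V E ends" using assms(1) unfolding matching_covered_def by simp
  have X: "X \<noteq> {}" "V - X \<noteq> {}"
    using assms(3) unfolding nontrivial_cut_def by (metis card.empty not_numeral_le_zero)+
  then show "cycle_extendable (contract_V V X) (contract_E E ends X) (contract_ends ends X)"
    by (rule cycle_extendable_contract[OF assms(4,2)])
  have "V - (V - X) \<noteq> {}" using X(1) assms(2) unfolding tight_cut_def by auto
  with X(2) show "cycle_extendable (contract_V V (V - X)) (contract_E E ends (V - X))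
      (contract_ends ends (V - X))"
    by (rule cycle_extendable_contract[OF assms(4) tight_cut_complement[OF mg assms(2)]])
qed

end
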